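(* A function $g\in\mathcal C$ satisfies $Tg=g$ if and only if $g\colon[0,1]\to[0,1]$ solves $-\gamma g'=g^{-1}$ for some $\gamma>0$ (with $g^{-1}$ the compositional inverse). In that case moreover: (a) $g\in\breve{\mathcal D}^\sharp$; (b) $\int g=\gamma$; (c) $\sigma(g)=\gamma$; (d) $g^*$ and $g'$ are continuously differentiable on $(0,1]$; (e) $g''(1)=1$ and $(g^* )'(1)=-\gamma$.
   Context: "Decreasing" means non-increasing; $\int f:=\int_0^1 f(x)\,dx$. $\mathcal E$: measurable decreasing $f\colon[0,1]\to[0,\infty)$ with $f(0)=1$ and $\int f>0$. $\mathcal C$: continuous $f\in\mathcal E$ with $f(1)=0$; $\breve{\mathcal C}$: convex $f\in\mathcal C$. $\mathcal D$: strictly decreasing $f\in\mathcal C$. $\mathcal D'$: $f\in\mathcal D$ continuously differentiable on $(0,1]$. $\mathcal D^\sharp$: $f\in\mathcal D'$ with $f'(1)=0$ and $\lim_{x\to0}f'(x)$ existing in $(-\infty,0]$; $\breve{\mathcal D}^\sharp:=\mathcal D^\sharp\cap\breve{\mathcal C}$. For $g\in\breve{\mathcal C}$, the stride is $\sigma(g):=\sup\{\alpha\ge0:\ \alpha-x\le\alpha g(x)\ \forall x\in[0,1]\}$. For $g\in\mathcal E$, $g^*(y):=\sup\{x\in[0,1]:g(x)\ge y\}$ (equal to $g^{-1}$ when $g\in\mathcal D$). $T$ on $\mathcal E$: $(Tf)(x)=\frac{\int_x^1f^*}{\int f}$. *)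

theory Defs
  imports "HOL-Analysis.Analysis"
begin

text \<open>All functions are real-valued functions considered on the interval [0,1];
  "decreasing" means non-increasing; integrals are over subintervals of [0,1].\<close>

definition decreasing01 :: "(real \<Rightarrow> real) \<Rightarrow> bool" where
  "decreasing01 f \<longleftrightarrow> (\<forall>x y. 0 \<le> x \<and> x \<le> y \<and> y \<le> 1 \<longrightarrow> f y \<le> f x)"

definition strictly_decreasing01 :: "(real \<Rightarrow> real) \<Rightarrow> bool" where
  "strictly_decreasing01 f \<longleftrightarrow> (\<forall>x y. 0 \<le> x \<and> x < y \<and> y \<le> 1 \<longrightarrow> f y < f x)"

definition classE :: "(real \<Rightarrow> real) \<Rightarrow> bool" where
  "classE f \<longleftrightarrow> set_borel_measurable lborel {0..1} f \<and> decreasing01 f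
     \<and> (\<forall>x\<in>{0..1}. 0 \<le> f x) \<and> f 0 = 1 \<and> integral {0..1} f > 0"

definition classC :: "(real \<Rightarrow> real) \<Rightarrow> bool" where
  "classC f \<longleftrightarrow> classE f \<and> continuous_on {0..1} f \<and> f 1 = 0"

definition classC_convex :: "(real \<Rightarrow> real) \<Rightarrow> bool" where
  "classC_convex f \<longleftrightarrow> classC f \<and> convex_on {0..1} f"

definition classD :: "(real \<Rightarrow> real) \<Rightarrow> bool" where
  "classD f \<longleftrightarrow> classC f \<and> strictly_decreasing01 f"

definition deriv_on01 :: "(real \<Rightarrow> real) \<Rightarrow> (real \<Rightarrow> real) \<Rightarrow> bool" where
  "deriv_on01 h h' \<longleftrightarrow> (\<forall>x\<in>{0<..1}. (h has_real_derivative h' x) (at x within {0..1}))"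

definition C1_on01 :: "(real \<Rightarrow> real) \<Rightarrow> bool" where
  "C1_on01 h \<longleftrightarrow> (\<exists>h'. deriv_on01 h h' \<and> continuous_on {0<..1} h')"

definition classD' :: "(real \<Rightarrow> real) \<Rightarrow> bool" where
  "classD' f \<longleftrightarrow> classD f \<and> C1_on01 f"

definition classD_sharp :: "(real \<Rightarrow> real) \<Rightarrow> bool" where
  "classD_sharp f \<longleftrightarrow> classD' f \<and>
     (\<exists>f'. deriv_on01 f f' \<and> f' 1 = 0 \<and> (\<exists>L\<le>0. (f' \<longlongrightarrow> L) (at_right 0)))"

definition classD_sharp_convex :: "(real \<Rightarrow> real) \<Rightarrow> bool" where
  "classD_sharp_convex f \<longleftrightarrow> classD_sharp f \<and> classC_convex f"

definition stride :: "(real \<Rightarrow> real) \<Rightarrow> real" where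
  "stride g = Sup {\<alpha>. \<alpha> \<ge> 0 \<and> (\<forall>x\<in>{0..1}. \<alpha> - x \<le> \<alpha> * g x)}"

definition gstar :: "(real \<Rightarrow> real) \<Rightarrow> real \<Rightarrow> real" where
  "gstar g y = Sup {x\<in>{0..1}. g x \<ge> y}"

definition Top :: "(real \<Rightarrow> real) \<Rightarrow> real \<Rightarrow> real" where
  "Top f x = integral {x..1} (gstar f) / integral {0..1} f"

definition solves_ode :: "real \<Rightarrow> (real \<Rightarrow> real) \<Rightarrow> bool" where
  "solves_ode \<gamma> g \<longleftrightarrow> bij_betw g {0..1} {0..1} \<and>
     (\<forall>x\<in>{0..1}. (g has_real_derivative (- inv_into {0..1} g x / \<gamma>)) (at x within {0..1}))"

end

theory Submission
  imports Defs
begin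

text \<open>
  T h is strictly decreasing for every h in C, since h* > 0 on [0,1). Hence a fixed point g is
  injective, i.e. a decreasing bijection of [0,1] with g* = g^-1, and differentiating
  g(x) = (integral of g^-1 over [x,1]) / (integral of g) yields the ODE with \<gamma> = integral of g.
  Conversely, integrating the ODE gives g(x) = (integral of g^-1 over [x,1]) / \<gamma>, and the
  integrals of g and g^-1 agree (the graph of g cuts the unit square into two pieces of these
  areas), so both equal \<gamma> and Tg = g. The remaining claims are read off this representation:
  g' = -g^-1/\<gamma> is increasing (convexity), the tangent 1 - x/\<gamma> at 0 lies below g and
  determines the stride, and the inverse function rule gives (g^-1)' = -\<gamma> / g^-1(g^-1), whence
  g'' = 1 / g^-1(g^-1).
\<close>

lemma convex_on_cong_on:
  assumes "convex_on S f" and "\<And>x. x \<in> S \<Longrightarrow> f x = g x"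
  shows "convex_on S g"
  using assms unfolding convex_on_def by (metis convexD)

lemma convex_on_integral_tail:
  fixes h :: "real \<Rightarrow> real"
  assumes int: "h integrable_on {a..b}"
    and dec: "\<And>x y. a \<le> x \<Longrightarrow> x \<le> y \<Longrightarrow> y \<le> b \<Longrightarrow> h y \<le> h x"
  shows "convex_on {a..b} (\<lambda>x. integral {x..b} h)"
proof (rule convex_on_linorderI)
  fix t x y :: real
  assume t: "0 < t" "t < 1" and xy: "x \<in> {a..b}" "y \<in> {a..b}" "x < y"
  define z where "z = (1 - t) * x + t * y"
  have zx: "z - x = t * (y - x)" and yz: "y - z = (1 - t) * (y - x)"
    unfolding z_def by algebra+
  have "0 < t * (y - x)" "0 < (1 - t) * (y - x)"
    using t xy by simp_all
  then have z: "x < z \<and> z < y"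
    using zx yz by linarith
  have sub: "h integrable_on {u..v}" if "a \<le> u" "v \<le> b" for u v
    using integrable_subinterval_real[OF int] that by simp
  define A where "A = integral {x..z} h"
  define B where "B = integral {z..y} h"
  have "t * (y - x) * h z = integral {x..z} (\<lambda>_. h z)"
    using z zx by simp
  also have "\<dots> \<le> A"
    unfolding A_def using z xy by (intro integral_le sub) (auto intro: dec)
  finally have A: "t * (y - x) * h z \<le> A" .
  have "B \<le> integral {z..y} (\<lambda>_. h z)"
    unfolding B_def using z xy by (intro integral_le sub) (auto intro: dec)
  also have "\<dots> = (1 - t) * (y - x) * h z"
    using z yz by simp
  finally have B: "B \<le> (1 - t) * (y - x) * h z" .
  have "t * B \<le> (1 - t) * A"
    using mult_left_mono[OF A, of "1 - t"] mult_left_mono[OF B, of t] t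
    by (simp add: algebra_simps)
  moreover have "integral {x..b} h = A + integral {z..b} h" "integral {z..b} h = B + integral {y..b} h"
    unfolding A_def B_def using z xy
    by (simp_all add: Henstock_Kurzweil_Integration.integral_combine sub)
  moreover have "(1 - t) *\<^sub>R x + t *\<^sub>R y = z"
    unfolding z_def by simp
  ultimately show "integral {(1 - t) *\<^sub>R x + t *\<^sub>R y..b} h
      \<le> (1 - t) * integral {x..b} h + t * integral {y..b} h"
    by (simp add: algebra_simps)
qed simp

text \<open>The condition \<alpha> - x \<le> \<alpha> g(x) in the stride says that the line 1 - x/\<alpha> lies below g;
  the tangent of g at 0 is the steepest such line.\<close>
lemma stride_eqI:
  assumes \<gamma>: "0 < \<gamma>" and g0: "g 0 = 1"
    and below: "\<And>x. x \<in> {0..1} \<Longrightarrow> 1 - x / \<gamma> \<le> g x"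
    and tangent: "(g has_real_derivative - 1 / \<gamma>) (at 0 within {0..1})"
  shows "stride g = \<gamma>"
  unfolding stride_def
proof (rule cSup_eq_maximum)
  show "\<gamma> \<in> {\<alpha>. 0 \<le> \<alpha> \<and> (\<forall>x\<in>{0..1}. \<alpha> - x \<le> \<alpha> * g x)}"
    using below \<gamma> by (auto simp: field_simps)
  fix \<alpha> assume \<alpha>: "\<alpha> \<in> {\<alpha>. 0 \<le> \<alpha> \<and> (\<forall>x\<in>{0..1}. \<alpha> - x \<le> \<alpha> * g x)}"
  show "\<alpha> \<le> \<gamma>"
  proof (rule ccontr)
    assume "\<not> \<alpha> \<le> \<gamma>"
    then have "- 1 / \<gamma> < - 1 / \<alpha>"
      using \<gamma> by (simp add: field_simps)
    moreover have "((\<lambda>x. (g x - 1) / x) \<longlongrightarrow> - 1 / \<gamma>) (at_right 0)"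
      using tangent g0 by (simp add: has_field_derivative_iff at_within_Icc_at_right)
    ultimately have "\<forall>\<^sub>F x in at_right 0. (g x - 1) / x < - 1 / \<alpha>"
      using order_tendstoD(2) by blast
    moreover have "\<forall>\<^sub>F x in at_right 0. x \<in> {0<..<1::real}"
      by (rule eventually_at_right_real) simp
    ultimately obtain x where x: "x \<in> {0<..<1}" "(g x - 1) / x < - 1 / \<alpha>"
      using eventually_happens'[OF trivial_limit_at_right_real] eventually_conj by blast
    then have "\<alpha> * g x < \<alpha> - x"
      using \<open>\<not> \<alpha> \<le> \<gamma>\<close> \<gamma> by (simp add: field_simps)
    moreover have "\<alpha> - x \<le> \<alpha> * g x"
      using \<alpha> x by simp
    ultimately show False
      by simp
  qed
qed

lemma decreasing01D: "decreasing01 f \<Longrightarrow> 0 \<le> x \<Longrightarrow> x \<le> y \<Longrightarrow> y \<le> 1 \<Longrightarrow> f y \<le> f x"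
  unfolding decreasing01_def by blast

lemma strictly_decreasing01_imp_inj_on: "strictly_decreasing01 f \<Longrightarrow> inj_on f {0..1}"
  unfolding strictly_decreasing01_def inj_on_def
  by (metis atLeastAtMost_iff less_irrefl linorder_neqE_linordered_idom)

lemma classC_image:
  assumes "classC g"
  shows "g ` {0..1} = {0..1}"
proof
  have dec: "decreasing01 g" and nonneg: "\<And>x. x \<in> {0..1} \<Longrightarrow> 0 \<le> g x"
    and g0: "g 0 = 1" and g1: "g 1 = 0" and cont: "continuous_on {0..1} g"
    using assms unfolding classC_def classE_def by auto
  show "g ` {0..1} \<subseteq> {0..1}"
    using decreasing01D[OF dec, of 0] nonneg g0 by force
  show "{0..1} \<subseteq> g ` {0..1}"
  proof
    fix y :: real
    assume "y \<in> {0..1}"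
    then obtain x where "0 \<le> x" "x \<le> 1" "g x = y"
      using IVT2'[of g 1 y 0] g0 g1 cont by auto
    then show "y \<in> g ` {0..1}" by force
  qed
qed

lemma gstar_upper: "x \<in> {0..1} \<Longrightarrow> y \<le> g x \<Longrightarrow> x \<le> gstar g y"
  unfolding gstar_def by (rule cSup_upper) (auto intro: bdd_aboveI[of _ 1])

lemma gstar_nonneg: "g 0 = 1 \<Longrightarrow> y \<le> 1 \<Longrightarrow> 0 \<le> gstar g y"
  using gstar_upper[of 0 y g] by simp

lemma gstar_antimono:
  assumes "g 0 = 1" and "y' \<le> y" and "y \<le> 1"
  shows "gstar g y \<le> gstar g y'"
  unfolding gstar_def
proof (rule cSup_subset_mono)
  show "{x \<in> {0..1}. y \<le> g x} \<noteq> {}"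
    using assms(1,3) by (auto intro!: exI[of _ 0])
qed (use assms(2) in \<open>auto intro: bdd_aboveI[of _ 1]\<close>)

lemma gstar_integrable:
  assumes "g 0 = 1" and "b \<le> 1"
  shows "gstar g integrable_on {a..b}"
proof -
  have "mono_on {a..b} (\<lambda>y. - gstar g y)"
    using gstar_antimono[of g, OF assms(1)] assms(2) by (intro mono_onI) force
  then show ?thesis
    using integrable_neg[OF integrable_on_mono_on] by fastforce
qed

lemma gstar_pos:
  assumes "classC g" and "0 \<le> y" and "y < 1"
  shows "0 < gstar g y"
proof -
  obtain x where x: "x \<in> {0..1}" "g x = y"
    using classC_image[OF assms(1)] assms(2,3) by (metis atLeastAtMost_iff imageE less_le)
  moreover have "g 0 = 1"
    using assms(1) unfolding classC_def classE_def by simp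
  ultimately have "x \<noteq> 0" using assms(3) by auto
  then show ?thesis
    using gstar_upper[of x y g] x by simp
qed

lemma Top_strictly_decreasing:
  assumes "classC g"
  shows "strictly_decreasing01 (Top g)"
  unfolding strictly_decreasing01_def
proof (intro allI impI)
  fix a b :: real
  assume ab: "0 \<le> a \<and> a < b \<and> b \<le> 1"
  have g0: "g 0 = 1" and I_pos: "0 < integral {0..1} g"
    using assms unfolding classC_def classE_def by auto
  define c where "c = (a + b) / 2"
  have c: "a < c" "c < b" using ab unfolding c_def by auto
  have int: "gstar g integrable_on {u..v}" if "v \<le> 1" for u v
    using gstar_integrable[of g, OF g0 that] .
  have "0 < (c - a) * gstar g c"
    using c ab gstar_pos[OF assms, of c] by simp
  also have "\<dots> = integral {a..c} (\<lambda>_. gstar g c)"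
    using c by simp
  also have "\<dots> \<le> integral {a..c} (gstar g)"
    using c ab int by (intro integral_le) (auto intro: gstar_antimono[of g, OF g0])
  also have "\<dots> \<le> integral {a..b} (gstar g)"
    using c ab int by (intro integral_subset_le) (auto intro: gstar_nonneg[of g, OF g0])
  also have "\<dots> = integral {a..1} (gstar g) - integral {b..1} (gstar g)"
    using Henstock_Kurzweil_Integration.integral_combine[of a b 1 "gstar g"] ab int by simp
  finally show "Top g b < Top g a"
    unfolding Top_def using I_pos by (simp add: divide_strict_right_mono)
qed

locale classC_bij =
  fixes g :: "real \<Rightarrow> real"
  assumes classC: "classC g" and inj: "inj_on g {0..1}"
begin

abbreviation ginv :: "real \<Rightarrow> real" where
  "ginv \<equiv> inv_into {0..1} g"

lemma g0: "g 0 = 1" and g1: "g 1 = 0" and integral_g_pos: "0 < integral {0..1} g"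
  and continuous_g: "continuous_on {0..1} g"
  using classC unfolding classC_def classE_def by auto

lemma bij: "bij_betw g {0..1} {0..1}"
  using inj classC_image[OF classC] by (simp add: bij_betw_def)

lemma ginv_mem: "y \<in> {0..1} \<Longrightarrow> ginv y \<in> {0..1}"
  and g_ginv: "y \<in> {0..1} \<Longrightarrow> g (ginv y) = y"
  and ginv_g: "x \<in> {0..1} \<Longrightarrow> ginv (g x) = x"
  using bij bij_betw_inv_into_left bij_betw_inv_into_right bij_betwE bij_betw_inv_into by metis+

lemma ginv_0: "ginv 0 = 1" and ginv_1: "ginv 1 = 0"
  using ginv_g[of 1] ginv_g[of 0] g0 g1 by simp_all

lemma g_le_iff: "x \<in> {0..1} \<Longrightarrow> y \<in> {0..1} \<Longrightarrow> g x \<le> g y \<longleftrightarrow> y \<le> x"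
  using classC inj decreasing01D[of g] unfolding classC_def classE_def inj_on_def
  by (metis atLeastAtMost_iff nle_le order_antisym)

lemma strictly_decreasing: "strictly_decreasing01 g"
  unfolding strictly_decreasing01_def using g_le_iff by (auto simp: not_le[symmetric])

lemma ginv_antimono: "0 \<le> x \<Longrightarrow> x \<le> y \<Longrightarrow> y \<le> 1 \<Longrightarrow> ginv y \<le> ginv x"
  using g_le_iff[of "ginv x" "ginv y"] ginv_mem g_ginv by simp

lemma ginv_continuous: "continuous_on {0..1} ginv"
  using continuous_on_inv[OF continuous_g compact_Icc, of ginv] ginv_g classC_image[OF classC]
  by simp

lemma gstar_eq_ginv:
  assumes "y \<in> {0..1}"
  shows "gstar g y = ginv y"
proof -
  have "{x \<in> {0..1}. y \<le> g x} = {0..ginv y}"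
    using g_le_iff[of "ginv y"] ginv_mem[OF assms] g_ginv[OF assms] by auto
  then show ?thesis
    unfolding gstar_def using ginv_mem[OF assms] by simp
qed

lemma Top_eq:
  assumes "x \<in> {0..1}"
  shows "Top g x = integral {x..1} ginv / integral {0..1} g"
proof -
  have "integral {x..1} (gstar g) = integral {x..1} ginv"
    by (rule integral_cong) (use assms gstar_eq_ginv in auto)
  then show ?thesis
    unfolding Top_def by simp
qed

lemma fixed_point_solves_ode:
  assumes fixed: "\<And>x. x \<in> {0..1} \<Longrightarrow> Top g x = g x"
  shows "solves_ode (integral {0..1} g) g"
  unfolding solves_ode_def
proof (intro conjI bij ballI)
  fix x :: real assume x: "x \<in> {0..1}"
  have "((\<lambda>u. integral {u..1} ginv / integral {0..1} g) has_real_derivative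
      - ginv x / integral {0..1} g) (at x within {0..1})"
    using DERIV_cdivide[OF integral_has_real_derivative'[OF ginv_continuous x]] by simp
  then show "(g has_real_derivative - ginv x / integral {0..1} g) (at x within {0..1})"
    by (rule has_field_derivative_transform_within[OF _ zero_less_one x])
       (simp add: fixed Top_eq[symmetric])
qed

lemma integral_eq_integral_ginv:
  assumes deriv: "\<And>x. x \<in> {0..1} \<Longrightarrow> (g has_real_derivative g' x) (at x within {0..1})"
  shows "integral {0..1} g = integral {0..1} ginv"
proof -
  define R where "R x = x * g x + integral {g x..1} ginv" for x
  \<comment> \<open>a primitive of g: the two g' terms of R' cancel because g^-1(g x) = x\<close>
  have "(R has_real_derivative g x) (at x within {0..1})" if x: "x \<in> {0..1}" for x
  proof -
    have gx: "g x \<in> {0..1}"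
      using classC_image[OF classC] x by auto
    have "((\<lambda>u. integral {u..1} ginv) \<circ> g has_real_derivative - ginv (g x) * g' x)
        (at x within {0..1})"
      by (rule DERIV_image_chain[OF _ deriv[OF x]])
         (use integral_has_real_derivative'[OF ginv_continuous gx] classC_image[OF classC] in simp)
    then have chain: "((\<lambda>u. integral {g u..1} ginv) has_real_derivative - (ginv (g x) * g' x))
        (at x within {0..1})"
      by (simp add: o_def)
    have "(R has_real_derivative x * g' x + 1 * g x + - (ginv (g x) * g' x)) (at x within {0..1})"
      unfolding R_def by (rule DERIV_add[OF DERIV_mult'[OF DERIV_ident deriv[OF x]] chain])
    then show ?thesis
      using ginv_g[OF x] by simp
  qed
  then have "(g has_integral (R 1 - R 0)) {0..1}"
    by (intro fundamental_theorem_of_calculus)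
       (auto simp: has_real_derivative_iff_has_vector_derivative)
  moreover have "R 1 - R 0 = integral {0..1} ginv"
    unfolding R_def using g0 g1 by simp
  ultimately show ?thesis
    by (simp add: integral_unique)
qed

lemma ginv_has_derivative:
  assumes y: "y \<in> {0..1}" and deriv: "(g has_real_derivative D) (at (ginv y) within {0..1})"
    and "D \<noteq> 0"
  shows "(ginv has_real_derivative 1 / D) (at y within {0..1})"
proof -
  have "(ginv has_derivative (*) (1 / D)) (at (g (ginv y)) within g ` {0..1})"
  proof (rule has_derivative_inverse_within)
    show "(g has_derivative (*) D) (at (ginv y) within {0..1})"
      using deriv by (simp add: has_field_derivative_def)
    have "continuous (at y within {0..1}) ginv"
      using ginv_continuous y by (simp add: continuous_on_eq_continuous_within)
    then show "continuous (at (g (ginv y)) within g ` {0..1}) ginv"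
      using g_ginv[OF y] classC_image[OF classC] by simp
    show "(*) (1 / D) \<circ> (*) D = id"
      using \<open>D \<noteq> 0\<close> by (auto simp: fun_eq_iff)
    show "linear ((*) (1 / D))"
      by (rule linear_times)
  qed (use ginv_mem[OF y] ginv_g in auto)
  then show ?thesis
    using g_ginv[OF y] classC_image[OF classC] by (simp add: has_field_derivative_def)
qed

end

locale ode_solution =
  fixes g :: "real \<Rightarrow> real" and \<gamma> :: real
  assumes classC: "classC g" and \<gamma>_pos: "0 < \<gamma>" and solves: "solves_ode \<gamma> g"

sublocale ode_solution \<subseteq> classC_bij
  using classC solves by unfold_locales (simp_all add: solves_ode_def bij_betw_def)

context ode_solution
begin

lemma g_has_derivative: "x \<in> {0..1} \<Longrightarrow> (g has_real_derivative - ginv x / \<gamma>) (at x within {0..1})"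
  using solves unfolding solves_ode_def by blast

lemma g_eq_integral:
  assumes x: "x \<in> {0..1}"
  shows "g x = integral {x..1} ginv / \<gamma>"
proof -
  have "((\<lambda>u. - ginv u / \<gamma>) has_integral (g 1 - g x)) {x..1}"
  proof (rule fundamental_theorem_of_calculus)
    show "x \<le> 1"
      using x by simp
  next
    fix u assume u: "u \<in> {x..1}"
    have "(g has_real_derivative - ginv u / \<gamma>) (at u within {x..1})"
      by (rule DERIV_subset[OF g_has_derivative]) (use x u in auto)
    then show "(g has_vector_derivative - ginv u / \<gamma>) (at u within {x..1})"
      by (simp add: has_real_derivative_iff_has_vector_derivative)
  qed
  from has_integral_mult_right[OF this, of "- \<gamma>"]
  have "(ginv has_integral \<gamma> * g x) {x..1}"
    using \<gamma>_pos g1 by simp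
  then show ?thesis
    using \<gamma>_pos by (simp add: integral_unique)
qed

lemma integral_ginv: "integral {0..1} ginv = \<gamma>"
  using g_eq_integral[of 0] g0 \<gamma>_pos by simp

lemma integral_g: "integral {0..1} g = \<gamma>"
  using integral_eq_integral_ginv[OF g_has_derivative] integral_ginv by simp

lemma Top_fixed: "x \<in> {0..1} \<Longrightarrow> Top g x = g x"
  using Top_eq g_eq_integral integral_g by simp

lemma convex: "convex_on {0..1} g"
proof -
  have "convex_on {0..1} (\<lambda>x. integral {x..1} ginv / \<gamma>)"
    using \<gamma>_pos
    by (intro convex_on_cdiv convex_on_integral_tail integrable_continuous_real ginv_continuous)
       (auto intro: ginv_antimono)
  then show ?thesis
    by (rule convex_on_cong_on) (simp add: g_eq_integral)
qed

lemma one_minus_le_g: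
  assumes x: "x \<in> {0..1}"
  shows "1 - x / \<gamma> \<le> g x"
proof -
  have int: "ginv integrable_on {0..1}"
    by (rule integrable_continuous_real[OF ginv_continuous])
  have "integral {0..x} ginv \<le> integral {0..x} (\<lambda>_. 1)"
    using x ginv_mem integrable_subinterval_real[OF int]
    by (intro integral_le) auto
  then have "integral {0..x} ginv \<le> x"
    using x by simp
  moreover have "integral {0..x} ginv + integral {x..1} ginv = \<gamma>"
    using Henstock_Kurzweil_Integration.integral_combine[OF _ _ int] x integral_ginv by simp
  ultimately show ?thesis
    using g_eq_integral[OF x] \<gamma>_pos by (simp add: field_simps)
qed

lemma stride: "stride g = \<gamma>"
proof (rule stride_eqI[OF \<gamma>_pos g0 one_minus_le_g])
  show "(g has_real_derivative - 1 / \<gamma>) (at 0 within {0..1})"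
    using g_has_derivative[of 0] ginv_0 by simp
qed

lemma ginv_ginv_pos:
  assumes y: "y \<in> {0<..1}"
  shows "0 < ginv (ginv y)"
proof -
  have "ginv y \<noteq> 1"
    using y g_ginv[of y] g1 by force
  then have "ginv (ginv y) \<noteq> 0"
    using ginv_mem[of y] g_ginv[of "ginv y"] g0 y by force
  then show ?thesis
    using ginv_mem[of "ginv y"] ginv_mem[of y] y by force
qed

lemma ginv_has_derivative_ginv_ginv:
  assumes y: "y \<in> {0<..1}"
  shows "(ginv has_real_derivative - \<gamma> / ginv (ginv y)) (at y within {0..1})"
  using ginv_has_derivative[OF _ g_has_derivative[OF ginv_mem]] ginv_ginv_pos[OF y] y \<gamma>_pos
  by simp

lemma continuous_on_inverse_ginv_ginv: "continuous_on {0<..1} (\<lambda>y. 1 / ginv (ginv y))"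
proof -
  have "continuous_on {0<..1} (\<lambda>y. ginv (ginv y))"
    using ginv_mem
    by (intro continuous_on_compose2[OF ginv_continuous continuous_on_subset[OF ginv_continuous]]) auto
  moreover have "\<forall>y\<in>{0<..1}. ginv (ginv y) \<noteq> 0"
    using ginv_ginv_pos by force
  ultimately show ?thesis
    by (intro continuous_intros) auto
qed

lemma deriv_on01_g: "deriv_on01 g (\<lambda>x. - ginv x / \<gamma>)"
  unfolding deriv_on01_def using g_has_derivative by simp

lemma deriv_on01_g': "deriv_on01 (\<lambda>x. - ginv x / \<gamma>) (\<lambda>y. 1 / ginv (ginv y))"
  unfolding deriv_on01_def
proof
  fix y :: real assume y: "y \<in> {0<..1}"
  show "((\<lambda>x. - ginv x / \<gamma>) has_real_derivative 1 / ginv (ginv y)) (at y within {0..1})"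
    using DERIV_cdivide[OF DERIV_minus[OF ginv_has_derivative_ginv_ginv[OF y]], of \<gamma>] \<gamma>_pos
    by simp
qed

lemma deriv_on01_gstar: "deriv_on01 (gstar g) (\<lambda>y. - \<gamma> / ginv (ginv y))"
  unfolding deriv_on01_def
proof
  fix y :: real assume y: "y \<in> {0<..1}"
  show "(gstar g has_real_derivative - \<gamma> / ginv (ginv y)) (at y within {0..1})"
    by (rule has_field_derivative_transform_within[OF ginv_has_derivative_ginv_ginv[OF y] zero_less_one])
       (use y gstar_eq_ginv in auto)
qed

lemma C1_on01_g': "C1_on01 (\<lambda>x. - ginv x / \<gamma>)"
  unfolding C1_on01_def using deriv_on01_g' continuous_on_inverse_ginv_ginv by blast

lemma C1_on01_gstar: "C1_on01 (gstar g)"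
proof -
  have "continuous_on {0<..1} (\<lambda>y. - \<gamma> * (1 / ginv (ginv y)))"
    by (intro continuous_intros continuous_on_inverse_ginv_ginv)
  then show ?thesis
    unfolding C1_on01_def using deriv_on01_gstar by auto
qed

lemma classD_sharp_convex: "classD_sharp_convex g"
proof -
  have cont: "continuous_on {0..1} (\<lambda>x. - ginv x / \<gamma>)"
    using \<gamma>_pos by (intro continuous_intros ginv_continuous) simp
  have "continuous_on {0<..1} (\<lambda>x. - ginv x / \<gamma>)"
    by (rule continuous_on_subset[OF cont]) auto
  then have "C1_on01 g"
    unfolding C1_on01_def using deriv_on01_g by blast
  moreover have "((\<lambda>x. - ginv x / \<gamma>) \<longlongrightarrow> - ginv 0 / \<gamma>) (at 0 within {0..1})"
    using cont by (simp add: continuous_on_eq_continuous_within continuous_within)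
  then have "((\<lambda>x. - ginv x / \<gamma>) \<longlongrightarrow> - 1 / \<gamma>) (at_right 0)"
    using ginv_0 by (simp add: at_within_Icc_at_right)
  moreover have "- ginv 1 / \<gamma> = 0" and "- 1 / \<gamma> \<le> 0"
    using ginv_1 \<gamma>_pos by simp_all
  ultimately have "classD_sharp g"
    unfolding classD_sharp_def classD'_def classD_def
    using classC strictly_decreasing deriv_on01_g by blast
  then show ?thesis
    unfolding classD_sharp_convex_def classC_convex_def using classC convex by blast
qed

end


theorem proposition2p3:
  fixes g :: "real \<Rightarrow> real"
  assumes "classC g"
  shows "((\<forall>x\<in>{0..1}. Top g x = g x) \<longleftrightarrow> (\<exists>\<gamma>>0. solves_ode \<gamma> g))
    \<and> (\<forall>\<gamma>>0. solves_ode \<gamma> g \<longrightarrow>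
         classD_sharp_convex g
       \<and> integral {0..1} g = \<gamma>
       \<and> stride g = \<gamma>
       \<and> C1_on01 (gstar g)
       \<and> (\<exists>g1. deriv_on01 g g1 \<and> C1_on01 g1)
       \<and> (\<exists>g1 g2. deriv_on01 g g1 \<and> deriv_on01 g1 g2 \<and> g2 1 = 1)
       \<and> (\<exists>h1. deriv_on01 (gstar g) h1 \<and> h1 1 = - \<gamma>))"
proof (intro conjI allI impI)
  show "(\<forall>x\<in>{0..1}. Top g x = g x) \<longleftrightarrow> (\<exists>\<gamma>>0. solves_ode \<gamma> g)"
  proof
    assume fixed: "\<forall>x\<in>{0..1}. Top g x = g x"
    then have "strictly_decreasing01 g"
      using Top_strictly_decreasing[OF assms] unfolding strictly_decreasing01_def by force
    then interpret classC_bij g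
      using assms strictly_decreasing01_imp_inj_on by unfold_locales
    show "\<exists>\<gamma>>0. solves_ode \<gamma> g"
      using fixed_point_solves_ode fixed integral_g_pos by blast
  next
    assume "\<exists>\<gamma>>0. solves_ode \<gamma> g"
    then obtain \<gamma> where "ode_solution g \<gamma>"
      using assms ode_solution.intro by blast
    then show "\<forall>x\<in>{0..1}. Top g x = g x"
      using ode_solution.Top_fixed by blast
  qed
next
  fix \<gamma> :: real
  assume "0 < \<gamma>" and "solves_ode \<gamma> g"
  then interpret ode_solution g \<gamma>
    using assms by unfold_locales
  show "classD_sharp_convex g" "integral {0..1} g = \<gamma>" "stride g = \<gamma>" "C1_on01 (gstar g)"
    by (fact classD_sharp_convex integral_g stride C1_on01_gstar)+
  show "\<exists>g1. deriv_on01 g g1 \<and> C1_on01 g1"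
    using deriv_on01_g C1_on01_g' by blast
  show "\<exists>g1 g2. deriv_on01 g g1 \<and> deriv_on01 g1 g2 \<and> g2 1 = 1"
    using deriv_on01_g deriv_on01_g' ginv_0 ginv_1 by force
  show "\<exists>h1. deriv_on01 (gstar g) h1 \<and> h1 1 = - \<gamma>"
    using deriv_on01_gstar ginv_0 ginv_1 by force
qed

end
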